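(* Let $m\geqslant 8$ with $m\equiv 0\pmod 4$, $d=(m-2)/2$, $e=\binom{(d-1)/2}{2}$. Regard $a_0,\dots,a_m,\alpha$ as indeterminates over $\mathbb F_2$, let $f=\sum_{k=0}^{m}a_{m-k}x^k$, and let $L_\alpha f=\sum_{k=0}^{d}b_{d-k}x^k$ (so $b_0=a_1\alpha$). Then $b_0^{de}\,\Pi_d(L_\alpha f)$ is a polynomial in $\mathbb F_2[a_0,\dots,a_m,\alpha]$, each of whose monomials contains a product of exactly $(d+2)e$ factors $a_i$ (counted with multiplicity), and it is homogeneous of degree $(6d+4)e$ for the weight $w$ with $w(\alpha)=1$ and $w(a_i)=i$.
   Context: $D_\alpha f(x)=f(x+\alpha)+f(x)$. For $m\equiv 0\pmod 4$, $d=(m-2)/2$ and $f$ of degree at most $m$, $L_\alpha f$ is the unique polynomial of degree at most $d$ such that $(L_\alpha f)(x(x+\alpha))=D_\alpha f(x)$ (this exists and is unique also with $a_i,\alpha$ indeterminates). For $d$ odd and a polynomial $g=\sum_{k=0}^{d}b_{d-k}x^k$ of degree $d$ in characteristic 2, $g'=b_0x^{d-1}+b_2x^{d-3}+\dots+b_{d-1}=b_0\prod_{i=1}^{(d-1)/2}(x+\tau_i)^2$, and $\Pi_d(g)=\prod_{i\neq j}(g(\tau_i)-g(\tau_j))$, which is symmetric in the $\tau_i^2$ and hence a rational function in $b_0,\dots,b_d$ (a polynomial in $b_0,\dots,b_d$ and $1/b_0$); $\Pi_d(g)=0$ exactly when $g$ does not have distinct critical values. *)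

theory Defs
  imports "HOL-Library.Poly_Mapping" "HOL-Library.Z2" "HOL-Computational_Algebra.Polynomial"
begin

text \<open>Variables: index i (i \<le> m) is a_i, index m+1 is alpha.\<close>

definition F2_to :: "bit \<Rightarrow> 'k::field" where
  "F2_to c = (if c = 0 then 0 else 1)"

definition mpoly_eval :: "((nat \<Rightarrow>\<^sub>0 nat) \<Rightarrow>\<^sub>0 bit) \<Rightarrow> (nat \<Rightarrow> 'k::field) \<Rightarrow> 'k" where
  "mpoly_eval P v = (\<Sum>mon\<in>Poly_Mapping.keys P.
      F2_to (Poly_Mapping.lookup P mon) * (\<Prod>i\<in>Poly_Mapping.keys mon. v i ^ Poly_Mapping.lookup mon i))"

definition fpoly :: "nat \<Rightarrow> (nat \<Rightarrow> 'k::field) \<Rightarrow> 'k poly" where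
  "fpoly m a = (\<Sum>k\<le>m. monom (a (m - k)) k)"

definition D_alpha :: "'k::field \<Rightarrow> 'k poly \<Rightarrow> 'k poly" where
  "D_alpha \<alpha> f = pcompose f [:\<alpha>, 1:] + f"

definition L_alpha :: "nat \<Rightarrow> 'k::field \<Rightarrow> 'k poly \<Rightarrow> 'k poly" where
  "L_alpha d \<alpha> f = (THE g. degree g \<le> d \<and> pcompose g [:0, \<alpha>, 1:] = D_alpha \<alpha> f)"

definition Pi_d :: "nat \<Rightarrow> 'k::field poly \<Rightarrow> 'k" where
  "Pi_d d g = (let n = (d - 1) div 2; b0 = coeff g d;
      \<tau> = (SOME \<tau>. length \<tau> = n \<and> pderiv g = smult b0 (\<Prod>i<n. [:\<tau> ! i, 1:] ^ 2))
    in (\<Prod>i<n. \<Prod>j\<in>{..<n} - {i}. poly g (\<tau> ! i) - poly g (\<tau> ! j)))"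

end

theory Submission
  imports Defs "Jordan_Normal_Form.Determinant"
begin

text \<open>Write b_0 = coeff g d for g = L_alpha f. By the Dickson identity
  x^k + (x + alpha)^k = D_k(alpha, x (x + alpha)) in characteristic 2, every coefficient of x^i in g is
  linear in the a_j and of weight m - 2 i. In characteristic 2 also g = G(x^2) + x H(x^2) and
  g' = H(x^2), so the tau_i^2 are the roots of H and the critical values are g(tau_i) = G(tau_i^2).
  As -1 = 1, Pi_d(g) is the squared Vandermonde determinant of the critical values, i.e. the Hankel
  determinant of their power sums; these are polynomials in the coefficients of g after multiplying by
  powers of b_0, by Newton's identities for the roots of H. Sums and products preserve degree and
  weight, and counting them gives (d + 2) e and (6 d + 4) e.\<close>

section \<open>Fields of characteristic 2\<close>

lemma two_eq_zero_char2: "CHAR('k::ring_1) = 2 \<Longrightarrow> (2::'k) = 0"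
  by (metis of_nat_CHAR of_nat_numeral)

lemma add_self_char2: "CHAR('k::ring_1) = 2 \<Longrightarrow> (x::'k) + x = 0"
  by (metis mult_2 mult_zero_left two_eq_zero_char2)

lemma uminus_char2: "CHAR('k::ring_1) = 2 \<Longrightarrow> - (x::'k) = x"
  by (metis add_self_char2 minus_unique)

lemma diff_char2: "CHAR('k::ring_1) = 2 \<Longrightarrow> (x::'k) - y = x + y"
  by (metis diff_conv_add_uminus uminus_char2)

lemma of_nat_char2: "CHAR('k::ring_1) = 2 \<Longrightarrow> (of_nat n::'k) = (if even n then 0 else 1)"
  by (induction n) (auto simp: add_self_char2 two_eq_zero_char2)

lemma sign_char2: "CHAR('k::ring_1) = 2 \<Longrightarrow> (of_int (sign p)::'k) = 1"
  by (simp add: sign_def uminus_char2)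

section \<open>Polynomial functions with all monomials of a given degree and weight\<close>

text \<open>Points v encode a_i as v i for i \<le> m and alpha as v (Suc m).\<close>

definition mon_eval :: "(nat \<Rightarrow>\<^sub>0 nat) \<Rightarrow> (nat \<Rightarrow> 'k::field) \<Rightarrow> 'k" where
  "mon_eval mo v = (\<Prod>i\<in>Poly_Mapping.keys mo. v i ^ Poly_Mapping.lookup mo i)"

definition mon_of_type :: "nat \<Rightarrow> nat \<Rightarrow> nat \<Rightarrow> (nat \<Rightarrow>\<^sub>0 nat) \<Rightarrow> bool" where
  "mon_of_type m D W mo \<longleftrightarrow> Poly_Mapping.keys mo \<subseteq> {..Suc m}
     \<and> (\<Sum>i\<le>m. Poly_Mapping.lookup mo i) = D
     \<and> Poly_Mapping.lookup mo (Suc m) + (\<Sum>i\<le>m. i * Poly_Mapping.lookup mo i) = W"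

definition homog_fun :: "nat \<Rightarrow> nat \<Rightarrow> nat \<Rightarrow> ((nat \<Rightarrow> 'k::field) \<Rightarrow> 'k) \<Rightarrow> bool" where
  "homog_fun m D W F \<longleftrightarrow>
     (\<exists>M. (\<forall>mo\<in>#M. mon_of_type m D W mo) \<and> (\<forall>v. F v = (\<Sum>mo\<in>#M. mon_eval mo v)))"

lemma mon_eval_conv_prod:
  assumes "finite K" "Poly_Mapping.keys mo \<subseteq> K"
  shows "mon_eval mo v = (\<Prod>i\<in>K. v i ^ Poly_Mapping.lookup mo i)"
  unfolding mon_eval_def
  by (rule prod.mono_neutral_left) (use assms in \<open>auto simp: in_keys_iff\<close>)

lemma mon_eval_add: "mon_eval (mo + mo') v = mon_eval mo v * mon_eval mo' v"
proof -
  let ?K = "Poly_Mapping.keys mo \<union> Poly_Mapping.keys mo'"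
  have "Poly_Mapping.keys (mo + mo') \<subseteq> ?K"
    by (rule keys_add)
  then show ?thesis
    by (simp add: mon_eval_conv_prod[of ?K] lookup_add power_add prod.distrib)
qed

lemma mon_of_type_add:
  "mon_of_type m D W mo \<Longrightarrow> mon_of_type m D' W' mo' \<Longrightarrow>
    mon_of_type m (D + D') (W + W') (mo + mo')"
  using keys_add[of mo mo'] unfolding mon_of_type_def
  by (auto simp: lookup_add sum.distrib algebra_simps)

lemma homog_fun_cong:
  "homog_fun m D W F \<Longrightarrow> D = D' \<Longrightarrow> W = W' \<Longrightarrow> (\<And>v. F v = G v) \<Longrightarrow> homog_fun m D' W' G"
  unfolding homog_fun_def by metis

lemma homog_fun_zero: "homog_fun m D W (\<lambda>v. 0)"
  unfolding homog_fun_def by (rule exI[of _ "{#}"]) simp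

lemma homog_fun_one: "homog_fun m 0 0 (\<lambda>v. 1)"
  unfolding homog_fun_def by (rule exI[of _ "{#0#}"]) (simp add: mon_of_type_def mon_eval_def)

lemma homog_fun_var_single:
  assumes "i \<le> Suc m" "D = (if i \<le> m then 1 else 0)" "W = (if i \<le> m then i else 1)"
  shows "homog_fun m D W (\<lambda>v. v i)"
  unfolding homog_fun_def
proof (intro exI[of _ "{#Poly_Mapping.single i 1#}"] conjI allI ballI)
  fix mo assume "mo \<in># {#Poly_Mapping.single i (1::nat)#}"
  then have "mo = Poly_Mapping.single i 1" by simp
  then show "mon_of_type m D W mo"
    using assms by (auto simp: mon_of_type_def lookup_single when_def if_distrib cong: if_cong)
qed (simp add: mon_eval_def)

lemma homog_fun_var: "i \<le> m \<Longrightarrow> homog_fun m 1 i (\<lambda>v. v i)"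
  by (rule homog_fun_var_single) auto

lemma homog_fun_alpha: "homog_fun m 0 1 (\<lambda>v. v (Suc m))"
  by (rule homog_fun_var_single) auto

lemma homog_fun_add:
  assumes "homog_fun m D W F" "homog_fun m D W G"
  shows "homog_fun m D W (\<lambda>v. F v + G v)"
proof -
  obtain M N where "\<forall>mo\<in>#M. mon_of_type m D W mo" "\<forall>v. F v = (\<Sum>mo\<in>#M. mon_eval mo v)"
    "\<forall>mo\<in>#N. mon_of_type m D W mo" "\<forall>v. G v = (\<Sum>mo\<in>#N. mon_eval mo v)"
    using assms unfolding homog_fun_def by blast
  then show ?thesis
    unfolding homog_fun_def by (intro exI[of _ "M + N"]) auto
qed

lemma sum_mset_mon_eval_mult:
  "(\<Sum>mo\<in>#(\<Sum>x\<in>#M. image_mset ((+) x) N). mon_eval mo v)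
     = (\<Sum>mo\<in>#M. mon_eval mo v) * (\<Sum>mo\<in>#N. mon_eval mo v)"
proof (induction M)
  case (add x M)
  have "(\<Sum>mo\<in>#image_mset ((+) x) N. mon_eval mo v) = mon_eval x v * (\<Sum>mo\<in>#N. mon_eval mo v)"
    by (induction N) (simp_all add: mon_eval_add algebra_simps)
  with add show ?case
    by (simp add: algebra_simps)
qed simp

lemma homog_fun_mult:
  assumes "homog_fun m D W F" "homog_fun m D' W' G"
  shows "homog_fun m (D + D') (W + W') (\<lambda>v. F v * G v)"
proof -
  obtain M N where M: "\<forall>mo\<in>#M. mon_of_type m D W mo" "\<forall>v. F v = (\<Sum>mo\<in>#M. mon_eval mo v)"
    and N: "\<forall>mo\<in>#N. mon_of_type m D' W' mo" "\<forall>v. G v = (\<Sum>mo\<in>#N. mon_eval mo v)"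
    using assms unfolding homog_fun_def by blast
  show ?thesis
    unfolding homog_fun_def
  proof (intro exI[of _ "\<Sum>x\<in>#M. image_mset ((+) x) N"] conjI)
    show "\<forall>mo\<in>#\<Sum>x\<in>#M. image_mset ((+) x) N. mon_of_type m (D + D') (W + W') mo"
      using M(1) N(1) by (auto intro: mon_of_type_add)
  qed (use M(2) N(2) sum_mset_mon_eval_mult in metis)
qed

lemma homog_fun_sum:
  "finite A \<Longrightarrow> (\<And>i. i \<in> A \<Longrightarrow> homog_fun m D W (F i)) \<Longrightarrow> homog_fun m D W (\<lambda>v. \<Sum>i\<in>A. F i v)"
  by (induction A rule: finite_induct) (simp_all add: homog_fun_zero homog_fun_add)

lemma homog_fun_prod:
  "finite A \<Longrightarrow> (\<And>i. i \<in> A \<Longrightarrow> homog_fun m (D i) (W i) (F i)) \<Longrightarrow>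
    homog_fun m (\<Sum>i\<in>A. D i) (\<Sum>i\<in>A. W i) (\<lambda>v. \<Prod>i\<in>A. F i v)"
  by (induction A rule: finite_induct) (simp_all add: homog_fun_one homog_fun_mult)

lemma homog_fun_power: "homog_fun m D W F \<Longrightarrow> homog_fun m (k * D) (k * W) (\<lambda>v. F v ^ k)"
  by (induction k) (simp_all add: homog_fun_one homog_fun_mult)

lemma homog_fun_of_nat_mult:
  "CHAR('k::field) = 2 \<Longrightarrow> homog_fun m D W (F :: (nat \<Rightarrow> 'k) \<Rightarrow> 'k) \<Longrightarrow>
    homog_fun m D W (\<lambda>v. of_nat k * F v)"
  by (simp add: of_nat_char2 homog_fun_zero)

lemma homog_fun_diff:
  "CHAR('k::field) = 2 \<Longrightarrow> homog_fun m D W (F :: (nat \<Rightarrow> 'k) \<Rightarrow> 'k) \<Longrightarrow> homog_fun m D W G \<Longrightarrow>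
    homog_fun m D W (\<lambda>v. F v - G v)"
  by (simp add: diff_char2 homog_fun_add)

text \<open>Over a field of characteristic 2 a sum of monomials with multiplicities is the evaluation
  of a polynomial over F_2: monomials occurring an even number of times cancel.\<close>

lemma F2_to_add: "CHAR('k::field) = 2 \<Longrightarrow> (F2_to (x + y) :: 'k) = F2_to x + F2_to y"
  by (cases x; cases y) (auto simp: F2_to_def two_eq_zero_char2)

lemma mpoly_eval_conv_sum:
  assumes "finite K" "Poly_Mapping.keys P \<subseteq> K"
  shows "mpoly_eval P v = (\<Sum>mo\<in>K. F2_to (Poly_Mapping.lookup P mo) * mon_eval mo v)"
  unfolding mpoly_eval_def mon_eval_def[symmetric]
  by (rule sum.mono_neutral_left) (use assms in \<open>auto simp: in_keys_iff F2_to_def\<close>)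

lemma mpoly_eval_add:
  assumes "CHAR('k::field) = 2"
  shows "mpoly_eval (P + Q) (v :: nat \<Rightarrow> 'k) = mpoly_eval P v + mpoly_eval Q v"
proof -
  let ?K = "Poly_Mapping.keys P \<union> Poly_Mapping.keys Q"
  have K: "finite ?K" "Poly_Mapping.keys (P + Q) \<subseteq> ?K"
    "Poly_Mapping.keys P \<subseteq> ?K" "Poly_Mapping.keys Q \<subseteq> ?K"
    by (simp_all add: keys_add)
  show ?thesis
    unfolding mpoly_eval_conv_sum[OF K(1,2)] mpoly_eval_conv_sum[OF K(1,3)]
      mpoly_eval_conv_sum[OF K(1,4)]
    by (simp only: lookup_add F2_to_add[OF assms] distrib_right sum.distrib)
qed

lemma mpoly_eval_zero: "mpoly_eval 0 v = 0"
  by (simp add: mpoly_eval_def)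

lemma mpoly_eval_single: "mpoly_eval (Poly_Mapping.single mo 1) v = mon_eval mo v"
  by (simp add: mpoly_eval_def mon_eval_def F2_to_def)

lemma homog_fun_imp_mpoly:
  assumes "CHAR('k::field) = 2" "homog_fun m D W (F :: (nat \<Rightarrow> 'k) \<Rightarrow> 'k)"
  shows "\<exists>P :: (nat \<Rightarrow>\<^sub>0 nat) \<Rightarrow>\<^sub>0 bit.
    (\<forall>mo\<in>Poly_Mapping.keys P. mon_of_type m D W mo) \<and> (\<forall>v. mpoly_eval P v = F v)"
proof -
  obtain M where M: "\<forall>mo\<in>#M. mon_of_type m D W mo" "\<forall>v. F v = (\<Sum>mo\<in>#M. mon_eval mo v)"
    using assms(2) unfolding homog_fun_def by blast
  define P where "P = (\<Sum>mo\<in>#M. Poly_Mapping.single mo (1::bit))"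
  have "Poly_Mapping.keys P \<subseteq> set_mset M"
    unfolding P_def
    by (induction M) (auto dest!: subsetD[OF keys_add])
  moreover have "mpoly_eval P v = (\<Sum>mo\<in>#M. mon_eval mo v)" for v :: "nat \<Rightarrow> 'k"
    unfolding P_def
    by (induction M) (simp_all add: mpoly_eval_add[OF assms(1)] mpoly_eval_single mpoly_eval_zero)
  ultimately show ?thesis
    using M by (intro exI[of _ P]) auto
qed

section \<open>The operator L_alpha\<close>

text \<open>The Dickson polynomials D_k(alpha, y), characterised by D_k(u + v, u v) = u^k + v^k, reduced
  mod 2 (hence dickson alpha 0 = 0 rather than 2).\<close>

fun dickson :: "'k::field \<Rightarrow> nat \<Rightarrow> 'k poly" where
  "dickson \<alpha> 0 = 0"
| "dickson \<alpha> (Suc 0) = [:\<alpha>:]"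
| "dickson \<alpha> (Suc (Suc k)) = Polynomial.smult \<alpha> (dickson \<alpha> (Suc k)) + pCons 0 (dickson \<alpha> k)"

fun dickson_coeff :: "nat \<Rightarrow> nat \<Rightarrow> nat" where
  "dickson_coeff 0 i = 0"
| "dickson_coeff (Suc 0) i = (if i = 0 then 1 else 0)"
| "dickson_coeff (Suc (Suc k)) i =
     dickson_coeff (Suc k) i + (if i = 0 then 0 else dickson_coeff k (i - 1))"

lemma dickson_coeff_eq_0: "k \<le> 2 * i \<Longrightarrow> dickson_coeff k i = 0"
  by (induction k i rule: dickson_coeff.induct) auto

lemma coeff_dickson: "coeff (dickson \<alpha> k) i = of_nat (dickson_coeff k i) * \<alpha> ^ (k - 2 * i)"
proof (induction \<alpha> k arbitrary: i rule: dickson.induct)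
  case (3 \<alpha> k)
  have "\<alpha> * coeff (dickson \<alpha> (Suc k)) i = of_nat (dickson_coeff (Suc k) i) * \<alpha> ^ (Suc (Suc k) - 2 * i)"
    using 3(1) by (cases "Suc k \<le> 2 * i") (auto simp: dickson_coeff_eq_0 Suc_diff_le)
  moreover have "coeff (pCons 0 (dickson \<alpha> k)) i =
      of_nat (if i = 0 then 0 else dickson_coeff k (i - 1)) * \<alpha> ^ (Suc (Suc k) - 2 * i)"
    using 3(2) by (cases i) (auto simp: dickson_coeff_eq_0 numeral_2_eq_2)
  ultimately show ?case
    by (simp add: algebra_simps)
qed (auto simp: coeff_pCons split: nat.split)

lemma degree_dickson: "degree (dickson \<alpha> k) \<le> (k - 1) div 2"
  by (rule degree_le) (auto simp: coeff_dickson dickson_coeff_eq_0)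

lemma dickson_pcompose:
  assumes "CHAR('k::field) = 2"
  shows "pcompose (dickson (\<alpha>::'k) k) [:0, \<alpha>, 1:] = [:\<alpha>, 1:] ^ k + [:0, 1:] ^ k"
proof (induction \<alpha> k rule: dickson.induct)
  case (1 \<alpha>)
  then show ?case
    using add_self_char2[of "1 :: 'k poly"] assms by simp
next
  case (2 \<alpha>)
  then show ?case
    using add_self_char2[OF assms, of 1] by (simp add: pcompose_pCons)
next
  case (3 \<alpha> k)
  define X A where "X = [:0, 1::'k:]" and "A = [:\<alpha>, 1:]"
  have A: "[:\<alpha>:] + X = A" and X: "[:\<alpha>:] + A = X"
    using add_self_char2[OF assms, of \<alpha>] by (simp_all add: X_def A_def)
  have shift: "Polynomial.smult \<alpha> p + X * p = A * p" "Polynomial.smult \<alpha> p + A * p = X * p"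
    for p :: "'k poly"
    by (subst A[symmetric], simp add: distrib_right) (subst X[symmetric], simp add: distrib_right)
  have "[:0, \<alpha>, 1:] = X * A"
    by (simp add: X_def A_def)
  then have "pcompose (dickson \<alpha> (Suc (Suc k))) [:0, \<alpha>, 1:]
      = Polynomial.smult \<alpha> (A ^ Suc k + X ^ Suc k) + X * A * (A ^ k + X ^ k)"
    using 3 unfolding X_def[symmetric] A_def[symmetric]
    by (simp add: pcompose_add pcompose_smult pcompose_pCons)
  also have "\<dots> = (Polynomial.smult \<alpha> (A ^ Suc k) + X * A ^ Suc k)
      + (Polynomial.smult \<alpha> (X ^ Suc k) + A * X ^ Suc k)"
    by (simp add: algebra_simps smult_add_right)
  also have "\<dots> = A ^ Suc (Suc k) + X ^ Suc (Suc k)"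
    by (simp only: shift power_Suc[symmetric])
  finally show ?case
    by (simp add: X_def A_def)
qed

lemma pcompose_cancel:
  fixes p r :: "'a::idom poly"
  assumes "pcompose p q = pcompose r q" "degree q > 0"
  shows "p = r"
  using pcompose_eq_0[of "p - r" q] assms by (simp add: pcompose_diff)

lemma L_alpha_eqI:
  assumes "degree g \<le> d" "pcompose g [:0, \<alpha>, 1:] = D_alpha \<alpha> f"
  shows "L_alpha d \<alpha> f = g"
  unfolding L_alpha_def
proof (rule the_equality)
  fix h assume "degree h \<le> d \<and> pcompose h [:0, \<alpha>, 1:] = D_alpha \<alpha> f"
  then have "pcompose h [:0, \<alpha>, 1:] = pcompose g [:0, \<alpha>, 1:]"
    using assms(2) by simp
  then show "h = g"
    by (rule pcompose_cancel) simp
qed (use assms in simp)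

lemma pcompose_monom: "pcompose (monom c k) q = Polynomial.smult c (q ^ k)"
proof -
  have "pcompose ([:0, 1:] ^ k) q = q ^ k"
    by (induction k) (simp_all add: pcompose_mult pcompose_pCons one_pCons)
  then show ?thesis
    by (simp add: monom_altdef pcompose_smult)
qed

lemma degree_dickson_sum:
  assumes "m \<le> 2 * d + 2"
  shows "degree (\<Sum>k\<le>m. Polynomial.smult (c k) (dickson \<alpha> k)) \<le> d"
proof (rule degree_sum_le)
  fix k assume "k \<in> {..m}"
  then have "(k - 1) div 2 \<le> d"
    using assms by simp
  then show "degree (Polynomial.smult (c k) (dickson \<alpha> k)) \<le> d"
    by (meson degree_dickson degree_smult_le order_trans)
qed simp

lemma L_alpha_fpoly:
  assumes "CHAR('k::field) = 2" "m \<le> 2 * d + 2"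
  shows "L_alpha d (\<alpha>::'k) (fpoly m a) = (\<Sum>k\<le>m. Polynomial.smult (a (m - k)) (dickson \<alpha> k))"
proof (rule L_alpha_eqI)
  show "degree (\<Sum>k\<le>m. Polynomial.smult (a (m - k)) (dickson \<alpha> k)) \<le> d"
    by (rule degree_dickson_sum[OF assms(2)])
  have "fpoly m a = (\<Sum>k\<le>m. Polynomial.smult (a (m - k)) ([:0, 1:] ^ k))"
    by (simp add: fpoly_def monom_altdef)
  moreover have "pcompose (fpoly m a) [:\<alpha>, 1:] = (\<Sum>k\<le>m. Polynomial.smult (a (m - k)) ([:\<alpha>, 1:] ^ k))"
    by (simp add: fpoly_def pcompose_sum pcompose_monom)
  ultimately show "pcompose (\<Sum>k\<le>m. Polynomial.smult (a (m - k)) (dickson \<alpha> k)) [:0, \<alpha>, 1:] = D_alpha \<alpha> (fpoly m a)"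
    by (simp add: D_alpha_def pcompose_sum pcompose_smult dickson_pcompose[OF assms(1)]
        smult_add_right sum.distrib)
qed

definition L_at :: "nat \<Rightarrow> nat \<Rightarrow> (nat \<Rightarrow> 'k::field) \<Rightarrow> 'k poly" where
  "L_at m d v = L_alpha d (v (Suc m)) (fpoly m v)"

lemma L_at_fun_upd: "L_at m d (a(Suc m := \<alpha>)) = L_alpha d \<alpha> (fpoly m a)"
  by (auto simp: L_at_def fpoly_def intro!: arg_cong[where f = "L_alpha d \<alpha>"] sum.cong)

lemma degree_L_at:
  assumes "CHAR('k::field) = 2" "m \<le> 2 * d + 2"
  shows "degree (L_at m d (v :: nat \<Rightarrow> 'k)) \<le> d"
  unfolding L_at_def L_alpha_fpoly[OF assms] by (rule degree_dickson_sum[OF assms(2)])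

lemma homog_fun_coeff_L_at:
  assumes "CHAR('k::field) = 2" "m \<le> 2 * d + 2"
  shows "homog_fun m 1 (m - 2 * i) (\<lambda>v :: nat \<Rightarrow> 'k. coeff (L_at m d v) i)"
proof -
  have "homog_fun m 1 (m - 2 * i)
      (\<lambda>v :: nat \<Rightarrow> 'k. of_nat (dickson_coeff k i) * (v (m - k) * v (Suc m) ^ (k - 2 * i)))"
    if "k \<le> m" for k
  proof (cases "k \<le> 2 * i")
    case False
    have "homog_fun m (1 + (k - 2 * i) * 0) ((m - k) + (k - 2 * i) * 1)
        (\<lambda>v :: nat \<Rightarrow> 'k. v (m - k) * v (Suc m) ^ (k - 2 * i))"
      by (intro homog_fun_mult homog_fun_var homog_fun_power homog_fun_alpha) simp
    then show ?thesis
      by (rule homog_fun_of_nat_mult[OF assms(1) homog_fun_cong]) (use False that in auto)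
  qed (simp add: dickson_coeff_eq_0 homog_fun_zero)
  then have "homog_fun m 1 (m - 2 * i) (\<lambda>v :: nat \<Rightarrow> 'k.
      \<Sum>k\<le>m. of_nat (dickson_coeff k i) * (v (m - k) * v (Suc m) ^ (k - 2 * i)))"
    by (intro homog_fun_sum) auto
  then show ?thesis
    by (rule homog_fun_cong)
      (simp_all add: L_at_def L_alpha_fpoly[OF assms] coeff_sum coeff_dickson algebra_simps)
qed

section \<open>Newton identities\<close>

lemma coeff_synthetic_div:
  fixes u :: "'k::comm_ring_1"
  assumes p: "[:- u, 1:] * q = p" and dq: "degree q < N"
  shows "k < N \<Longrightarrow> coeff q (N - 1 - k) = (\<Sum>l\<le>k. coeff p (N - l) * u ^ (k - l))"
proof (induction k)
  have cp: "coeff p (Suc j) = coeff q j - u * coeff q (Suc j)" for j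
    unfolding p[symmetric] by simp
  {
    case 0
    then show ?case
      using cp[of "N - 1"] dq by (simp add: coeff_eq_0)
  next
    case (Suc k)
    then have "coeff q (N - 1 - Suc k) = coeff p (N - Suc k) + u * coeff q (N - 1 - k)"
      using cp[of "N - 1 - Suc k"] by (simp add: Suc_diff_Suc algebra_simps)
    with Suc show ?case
      by (simp add: sum_distrib_left Suc_diff_le algebra_simps)
  }
qed

locale newton =
  fixes n :: nat and u :: "nat \<Rightarrow> 'k::field" and b0 :: 'k and H :: "'k poly"
  assumes H: "H = Polynomial.smult b0 (\<Prod>i<n. [:- u i, 1:])"
begin

definition c :: "nat \<Rightarrow> 'k" where "c l = coeff H (n - l)"
definition p :: "nat \<Rightarrow> 'k" where "p s = (\<Sum>i<n. u i ^ s)"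

lemma degree_H: "degree H \<le> n"
proof -
  have "degree (\<Prod>i<n. [:- u i, 1:]) \<le> (\<Sum>i<n. degree [:- u i, 1:])"
    using degree_prod_sum_le[of "{..<n}" "\<lambda>i. [:- u i, 1:]"] by (simp add: o_def)
  thus ?thesis by (simp add: H)
qed

lemma c_0: "c 0 = b0"
proof -
  have "lead_coeff (\<Prod>i<n. [:- u i, 1:]) = 1" by (simp add: lead_coeff_prod)
  moreover have "degree (\<Prod>i<n. [:- u i, 1:]) = n"
    by (subst degree_prod_eq_sum_degree) auto
  moreover have "c 0 = coeff H n" by (simp add: c_def)
  ultimately show ?thesis by (simp add: H)
qed

lemma poly_H: "poly H x = (\<Sum>l\<le>n. c l * x ^ (n - l))"
proof -
  have "poly H x = (\<Sum>j\<le>n. coeff H j * x ^ j)"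
    unfolding poly_altdef by (rule sum.mono_neutral_left) (use degree_H in \<open>auto simp: coeff_eq_0\<close>)
  also have "\<dots> = (\<Sum>l\<le>n. coeff H (n - l) * x ^ (n - l))"
    by (rule sum.reindex_bij_witness[of _ "\<lambda>l. n - l" "\<lambda>l. n - l"]) auto
  finally show ?thesis by (simp add: c_def)
qed

lemma poly_H_root: "i < n \<Longrightarrow> poly H (u i) = 0"
  by (auto simp: H poly_prod)

lemma newton_identity_ge:
  assumes "n \<le> k"
  shows "(\<Sum>l\<le>n. c l * p (k - l)) = 0"
proof -
  have "(\<Sum>l\<le>n. c l * p (k - l)) = (\<Sum>i<n. u i ^ (k - n) * (\<Sum>l\<le>n. c l * u i ^ (n - l)))"
    unfolding p_def sum_distrib_left
  proof (subst sum.swap, intro sum.cong[OF refl])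
    fix i l assume l: "l \<in> {..n}"
    have "k - l = (k - n) + (n - l)" using l assms by auto
    thus "c l * u i ^ (k - l) = u i ^ (k - n) * (c l * u i ^ (n - l))"
      by (simp add: power_add algebra_simps)
  qed
  also have "\<dots> = 0" using poly_H_root by (simp add: poly_H[symmetric])
  finally show ?thesis .
qed

definition q :: "nat \<Rightarrow> 'k poly" where "q i = (\<Prod>j\<in>{..<n} - {i}. [:- u j, 1:])"

lemma pderiv_H: "pderiv H = Polynomial.smult b0 (\<Sum>i<n. q i)"
  by (simp add: H pderiv_smult pderiv_prod q_def pderiv_pCons)

lemma q_mult: "i < n \<Longrightarrow> [:- u i, 1:] * Polynomial.smult b0 (q i) = H"
  by (simp add: H q_def prod.remove[of "{..<n}" i])

lemma degree_q: "degree (Polynomial.smult b0 (q i)) < n" if "i < n"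
proof -
  have "degree (q i) \<le> (\<Sum>j\<in>{..<n} - {i}. degree [:- u j, 1:])"
    using degree_prod_sum_le[of "{..<n} - {i}" "\<lambda>j. [:- u j, 1:]"] by (simp add: o_def q_def)
  also have "\<dots> < n"
    using that by auto
  finally show ?thesis
    by (meson degree_smult_le le_less_trans)
qed

lemma newton_identity_less:
  assumes "k < n"
  shows "(\<Sum>l\<le>k. c l * p (k - l)) = of_nat (n - k) * c k"
proof -
  have "(\<Sum>l\<le>k. c l * p (k - l)) = (\<Sum>i<n. \<Sum>l\<le>k. coeff H (n - l) * u i ^ (k - l))"
    unfolding p_def c_def sum_distrib_left by (rule sum.swap)
  also have "\<dots> = (\<Sum>i<n. coeff (Polynomial.smult b0 (q i)) (n - 1 - k))"
    using assms by (intro sum.cong refl coeff_synthetic_div[OF q_mult degree_q, symmetric]) auto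
  also have "\<dots> = coeff (pderiv H) (n - 1 - k)"
    by (simp add: pderiv_H coeff_sum sum_distrib_left)
  also have "\<dots> = of_nat (n - k) * c k"
    using assms by (simp add: coeff_pderiv c_def Suc_diff_Suc)
  finally show ?thesis .
qed

lemma newton_recurrence:
  assumes "1 \<le> s"
  shows "b0 * p s = (if s < n then of_nat (n - s) * c s else 0) - (\<Sum>l\<in>{1..min s n}. c l * p (s - l))"
proof -
  have split: "(\<Sum>l\<le>min s n. c l * p (s - l)) = c 0 * p s + (\<Sum>l\<in>{1..min s n}. c l * p (s - l))"
  proof -
    have "{..min s n} = insert 0 {1..min s n}" by auto
    thus ?thesis by simp
  qed
  show ?thesis
  proof (cases "s < n")
    case True
    then show ?thesis using newton_identity_less[OF True] split c_0 by (simp add: algebra_simps)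
  next
    case False
    hence mn: "min s n = n" by simp
    show ?thesis using newton_identity_ge[of s] split c_0 False unfolding mn by (simp add: eq_neg_iff_add_eq_0)
  qed
qed

end

text \<open>The power sum b0^s p s as a polynomial in the coefficients cc l = coeff H (n - l),
  obtained by unfolding newton_recurrence.\<close>

function newton_pow_sum :: "(nat \<Rightarrow> 'k::field) \<Rightarrow> nat \<Rightarrow> nat \<Rightarrow> 'k" where
  "newton_pow_sum cc n s = (if s = 0 then of_nat n else
     cc 0 ^ (s - 1) * (if s < n then of_nat (n - s) * cc s else 0)
     - (\<Sum>l\<in>{1..min s n}. cc l * cc 0 ^ (l - 1) * newton_pow_sum cc n (s - l)))"
  by auto
termination by (relation "measure (\<lambda>(cc, n, s). s)") auto

declare newton_pow_sum.simps[simp del]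

lemma (in newton) newton_pow_sum_eq: "b0 ^ s * p s = newton_pow_sum c n s"
proof (induction s rule: less_induct)
  case (less s)
  show ?case
  proof (cases "s = 0")
    case True then show ?thesis by (simp add: newton_pow_sum.simps p_def)
  next
    case False
    have "b0 ^ s * p s = b0 ^ (s - 1) * (b0 * p s)"
      using False by (cases s) auto
    also have "\<dots> = b0 ^ (s - 1) * (if s < n then of_nat (n - s) * c s else 0)
        - (\<Sum>l\<in>{1..min s n}. c l * b0 ^ (l - 1) * (b0 ^ (s - l) * p (s - l)))"
    proof -
      have pt: "b0 ^ (s - 1) * (c l * p (s - l)) = c l * b0 ^ (l - 1) * (b0 ^ (s - l) * p (s - l))"
        if "l \<in> {1..min s n}" for l
      proof -
        have "s - 1 = (l - 1) + (s - l)" using that by auto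
        thus ?thesis by (simp add: power_add algebra_simps)
      qed
      have se: "b0 ^ (s - 1) * (\<Sum>l\<in>{1..min s n}. c l * p (s - l))
          = (\<Sum>l\<in>{1..min s n}. c l * b0 ^ (l - 1) * (b0 ^ (s - l) * p (s - l)))"
        unfolding sum_distrib_left by (rule sum.cong[OF refl]) (rule pt)
      have "b0 * p s = (if s < n then of_nat (n - s) * c s else 0) - (\<Sum>l\<in>{1..min s n}. c l * p (s - l))"
        using False by (intro newton_recurrence) simp
      thus ?thesis unfolding se[symmetric] by (simp only: right_diff_distrib)
    qed
    also have "\<dots> = newton_pow_sum c n s"
      using False less by (subst newton_pow_sum.simps) (auto simp: c_0 intro!: sum.cong)
    finally show ?thesis .
  qed
qed

section \<open>Critical points in characteristic 2\<close>

definition even_part :: "'k::field poly \<Rightarrow> nat \<Rightarrow> 'k poly" where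
  "even_part g n = (\<Sum>j\<le>n. monom (coeff g (2 * j)) j)"

definition odd_part :: "'k::field poly \<Rightarrow> nat \<Rightarrow> 'k poly" where
  "odd_part g n = (\<Sum>j\<le>n. monom (coeff g (Suc (2 * j))) j)"

lemma coeff_even_part: "coeff (even_part g n) j = (if j \<le> n then coeff g (2 * j) else 0)"
  by (simp add: even_part_def coeff_sum coeff_monom)

lemma coeff_odd_part: "coeff (odd_part g n) j = (if j \<le> n then coeff g (Suc (2 * j)) else 0)"
  by (simp add: odd_part_def coeff_sum coeff_monom)

lemma degree_even_part: "degree (even_part g n) \<le> n"
  by (rule degree_le) (simp add: coeff_even_part)

lemma degree_odd_part: "degree (odd_part g n) \<le> n"
  by (rule degree_le) (simp add: coeff_odd_part)

lemma coeff_pcompose_square: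
  fixes p :: "'a::comm_semiring_1 poly"
  shows "coeff (pcompose p [:0, 0, 1:]) i = (if even i then coeff p (i div 2) else 0)"
proof (induction p arbitrary: i)
  case (pCons a p)
  have "pcompose (pCons a p) [:0, 0, 1:] = pCons a (pCons 0 (pcompose p [:0, 0, 1:]))"
    by (simp add: pcompose_pCons)
  then show ?case
    using pCons.IH by (cases i) (auto simp: coeff_pCons split: nat.split)
qed simp

lemma pderiv_char2:
  assumes "CHAR('k::field) = 2" "degree (g::'k poly) \<le> Suc (2 * n)"
  shows "pderiv g = pcompose (odd_part g n) [:0, 0, 1:]"
proof (rule poly_eqI)
  fix i
  have "coeff g (Suc i) = 0" if "even i" "n < i div 2"
    using that assms(2) by (intro coeff_eq_0) (auto elim!: evenE)
  then show "coeff (pderiv g) i = coeff (pcompose (odd_part g n) [:0, 0, 1:]) i"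
    by (auto simp: coeff_pderiv coeff_pcompose_square coeff_odd_part of_nat_char2[OF assms(1)])
qed

lemma even_odd_decomp:
  assumes "degree g \<le> Suc (2 * n)"
  shows "g = pcompose (even_part g n) [:0, 0, 1:] + pCons 0 (pcompose (odd_part g n) [:0, 0, 1:])"
proof (rule poly_eqI)
  fix i
  have "coeff g i = 0" if "n < i div 2"
    using that assms by (intro coeff_eq_0) linarith
  then show "coeff g i = coeff (pcompose (even_part g n) [:0, 0, 1:]
      + pCons 0 (pcompose (odd_part g n) [:0, 0, 1:])) i"
    by (cases i) (auto simp: coeff_pCons coeff_pcompose_square coeff_even_part coeff_odd_part
        poly_0_coeff_0 elim!: oddE)
qed

lemma poly_even_odd_decomp:
  "degree g \<le> Suc (2 * n) \<Longrightarrow>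
    poly g x = poly (even_part g n) (x ^ 2) + x * poly (odd_part g n) (x ^ 2)"
  using arg_cong[where f = "\<lambda>p. poly p x", OF even_odd_decomp]
  by (simp add: poly_pcompose power2_eq_square)

lemma square_linear_char2:
  "CHAR('k::field) = 2 \<Longrightarrow> [:t, 1:] ^ 2 = pcompose [:- (t ^ 2), 1:] [:0, 0, 1::'k:]"
  by (simp add: power2_eq_square pcompose_pCons uminus_char2 add_self_char2)

lemma ex_critical_points:
  assumes ch: "CHAR('k::alg_closed_field) = 2" and dg: "degree (g::'k poly) \<le> Suc (2 * n)"
    and b: "coeff g (Suc (2 * n)) \<noteq> 0"
  shows "\<exists>\<tau>. length \<tau> = n \<and>
    pderiv g = Polynomial.smult (coeff g (Suc (2 * n))) (\<Prod>i<n. [:\<tau> ! i, 1:] ^ 2)"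
proof -
  define H where "H = odd_part g n"
  have cH: "coeff H n = coeff g (Suc (2 * n))"
    by (simp add: H_def coeff_odd_part)
  then have degH: "degree H = n" and lcH: "lead_coeff H = coeff g (Suc (2 * n))"
    using degree_odd_part[of g n] b unfolding H_def[symmetric] by (metis le_antisym le_degree)+
  obtain A where "size A = degree H" "H = Polynomial.smult (lead_coeff H) (\<Prod>x\<in>#A. [:- x, 1:])"
    using alg_closed_imp_factorization[of H] b lcH by force
  then have A: "size A = n" "H = Polynomial.smult (coeff g (Suc (2 * n))) (\<Prod>x\<in>#A. [:- x, 1:])"
    by (simp_all add: degH cH)
  obtain us where us: "mset us = A"
    using ex_mset by blast
  define \<tau> where "\<tau> = map (\<lambda>x. SOME t. t ^ 2 = x) us"
  have len: "length \<tau> = n" "length us = n"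
    using A(1) us by (auto simp: \<tau>_def)
  have sq: "(\<tau> ! i) ^ 2 = us ! i" if "i < n" for i
    using someI_ex[OF nth_root_exists[of 2 "us ! i"]] that len by (simp add: \<tau>_def)
  have "pderiv g = pcompose H [:0, 0, 1:]"
    unfolding H_def by (rule pderiv_char2[OF ch dg])
  also have "H = Polynomial.smult (coeff g (Suc (2 * n))) (\<Prod>i<n. [:- (us ! i), 1:])"
    using A(2) len(2) by (simp add: us[symmetric] prod_mset_prod_list prod.list_conv_set_nth
        atLeast0LessThan flip: mset_map)
  also have "pcompose \<dots> [:0, 0, 1:] = Polynomial.smult (coeff g (Suc (2 * n))) (\<Prod>i<n. [:\<tau> ! i, 1:] ^ 2)"
    by (simp add: pcompose_smult pcompose_prod square_linear_char2[OF ch] sq)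
  finally show ?thesis
    using len by blast
qed

locale critical_points =
  fixes g :: "'k::field poly" and n :: nat and \<tau> :: "'k list"
  assumes char_2: "CHAR('k) = 2" and degree_g: "degree g \<le> Suc (2 * n)" and length_tau: "length \<tau> = n"
    and pderiv_g: "pderiv g = Polynomial.smult (coeff g (Suc (2 * n))) (\<Prod>i<n. [:\<tau> ! i, 1:] ^ 2)"
begin

lemma odd_part_critical_points:
  "odd_part g n = Polynomial.smult (coeff g (Suc (2 * n))) (\<Prod>i<n. [:- ((\<tau> ! i) ^ 2), 1:])"
proof -
  have "pcompose (odd_part g n) [:0, 0, 1:]
      = pcompose (Polynomial.smult (coeff g (Suc (2 * n))) (\<Prod>i<n. [:- ((\<tau> ! i) ^ 2), 1:])) [:0, 0, 1:]"
    by (simp add: pderiv_char2[OF char_2 degree_g, symmetric] pderiv_g pcompose_smult pcompose_prod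
        square_linear_char2[OF char_2])
  then show ?thesis
    by (rule pcompose_cancel) simp
qed

lemma poly_critical_point:
  assumes "i < n"
  shows "poly g (\<tau> ! i) = poly (even_part g n) ((\<tau> ! i) ^ 2)"
proof -
  have "(\<Prod>j<n. poly [:\<tau> ! j, 1:] (\<tau> ! i) ^ 2) = 0"
    using assms by (intro prod_zero bexI[of _ i]) (simp_all add: add_self_char2[OF char_2])
  then have "poly (pderiv g) (\<tau> ! i) = 0"
    by (simp add: pderiv_g poly_prod)
  then have "poly (odd_part g n) ((\<tau> ! i) ^ 2) = 0"
    by (simp add: pderiv_char2[OF char_2 degree_g] poly_pcompose power2_eq_square)
  then show ?thesis
    by (simp add: poly_even_odd_decomp[OF degree_g])
qed

end

section \<open>Determinants\<close>

lemma det_leibniz: "det (mat n n f) = (\<Sum>p\<in>{p. p permutes {0..<n}}. signof p * (\<Prod>i=0..<n. f (i, p i)))"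
proof -
  have "det (mat n n f) = (\<Sum>p\<in>{p. p permutes {0..<n}}. signof p * (\<Prod>i=0..<n. mat n n f $$ (i, p i)))"
    by (rule det_def') simp
  also have "\<dots> = (\<Sum>p\<in>{p. p permutes {0..<n}}. signof p * (\<Prod>i=0..<n. f (i, p i)))"
  proof (rule sum.cong[OF refl])
    fix p assume "p \<in> {p. p permutes {0..<n}}"
    hence "i < n \<Longrightarrow> p i < n" for i using permutes_in_image[of p "{0..<n}" i] by auto
    thus "signof p * (\<Prod>i=0..<n. mat n n f $$ (i, p i)) = signof p * (\<Prod>i=0..<n. f (i, p i))"
      by (auto intro!: prod.cong)
  qed
  finally show ?thesis .
qed

text \<open>Multiplying by the unitriangular matrix T of coefficients of the polynomials
  \<Prod>l<k. (x - r l) turns the Vandermonde matrix into a lower triangular one.\<close>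

lemma det_vandermonde:
  fixes r :: "nat \<Rightarrow> 'a::field"
  shows "det (mat n n (\<lambda>(i, k). r i ^ k)) = (\<Prod>i<n. \<Prod>l<i. r i - r l)"
proof -
  define V where "V = mat n n (\<lambda>(i, k). r i ^ k)"
  define P where "P k = (\<Prod>l<k. [:- r l, 1:])" for k
  define T where "T = mat n n (\<lambda>(j, k). coeff (P k) j)"
  have V: "V \<in> carrier_mat n n" and T: "T \<in> carrier_mat n n"
    by (auto simp: V_def T_def)
  have degP: "degree (P k) = k" for k
    unfolding P_def by (subst degree_prod_eq_sum_degree) auto
  have lcP: "coeff (P k) k = 1" for k
    using lead_coeff_prod[of "\<lambda>l. [:- r l, 1:]" "{..<k}"] degP[of k] by (simp add: P_def)
  have "upper_triangular T"
    unfolding upper_triangular_def T_def using degP by (auto intro!: coeff_eq_0)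
  then have "det T = prod_list (diag_mat T)"
    by (rule det_upper_triangular[OF _ T])
  also have "\<dots> = 1"
    unfolding prod_list_diag_prod by (simp add: T_def lcP)
  finally have detT: "det T = 1" .
  have "(V * T) $$ (i, k) = (\<Prod>l<k. r i - r l)" if "i < n" "k < n" for i k
  proof -
    have "(V * T) $$ (i, k) = (\<Sum>j<n. coeff (P k) j * r i ^ j)"
      using that by (simp add: V_def T_def scalar_prod_def atLeast0LessThan mult.commute)
    also have "\<dots> = (\<Sum>j\<le>degree (P k). coeff (P k) j * r i ^ j)"
      by (rule sum.mono_neutral_right) (use that degP in \<open>auto simp: coeff_eq_0\<close>)
    finally show ?thesis
      by (simp add: poly_altdef[symmetric] P_def poly_prod)
  qed
  then have VT: "V * T = mat n n (\<lambda>(i, k). \<Prod>l<k. r i - r l)"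
    by (intro eq_matI) (auto simp: V_def T_def)
  have "det (mat n n (\<lambda>(i, k). \<Prod>l<k. r i - r l))
      = prod_list (diag_mat (mat n n (\<lambda>(i, k). \<Prod>l<k. r i - r l)))"
    by (rule det_lower_triangular[of n]) auto
  also have "\<dots> = (\<Prod>i<n. \<Prod>l<i. r i - r l)"
    unfolding prod_list_diag_prod by (simp add: atLeast0LessThan)
  finally show ?thesis
    using det_mult[OF V T] detT VT by (simp add: V_def)
qed

lemma det_hankel_power_sums:
  fixes r :: "nat \<Rightarrow> 'a::field"
  shows "det (mat n n (\<lambda>(i, k). \<Sum>j<n. r j ^ (i + k))) = (\<Prod>i<n. \<Prod>l<i. r i - r l) ^ 2"
proof -
  define V where "V = mat n n (\<lambda>(i, k). r i ^ k)"
  have V: "V \<in> carrier_mat n n"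
    by (simp add: V_def)
  have "mat n n (\<lambda>(i, k). \<Sum>j<n. r j ^ (i + k)) = transpose_mat V * V"
    by (rule eq_matI) (auto simp: V_def scalar_prod_def power_add atLeast0LessThan intro!: sum.cong)
  moreover have "det (transpose_mat V * V) = det V * det V"
    using det_mult[OF _ V, of "transpose_mat V"] det_transpose[OF V] V by simp
  ultimately show ?thesis
    using det_vandermonde[of n r] by (simp add: V_def power2_eq_square)
qed

lemma sum_permutes_add:
  fixes n :: nat
  assumes "p permutes {0..<n}"
  shows "(\<Sum>i=0..<n. i + p i) = n * (n - 1)"
proof -
  have "(\<Sum>i=0..<n. p i) = (\<Sum>i=0..<n. i)"
    using sum.permute[OF assms, of "\<lambda>i. i"] by (simp add: o_def)
  moreover have "(\<Sum>i=0..<n. i) * 2 = n * (n - (1::nat))"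
    by (induction n) (auto simp: algebra_simps)
  ultimately show ?thesis by (simp add: sum.distrib)
qed

lemma prod_diff_pairs_char2:
  fixes r :: "nat \<Rightarrow> 'k::field"
  assumes ch: "CHAR('k) = 2"
  shows "(\<Prod>i<n. \<Prod>j\<in>{..<n} - {i}. (r i - r j :: 'k)) = (\<Prod>i<n. \<Prod>l<i. r i - r l) ^ 2"
proof -
  have split: "(\<Prod>j\<in>{..<n} - {i}. r i - r j) = (\<Prod>l<i. r i - r l) * (\<Prod>j\<in>{Suc i..<n}. r i - r j)" if "i < n" for i
  proof -
    have "{..<n} - {i} = {..<i} \<union> {Suc i..<n}" using that by auto
    moreover have "{..<i} \<inter> {Suc i..<n} = {}" by auto
    ultimately show ?thesis by (simp add: prod.union_disjoint)
  qed
  have sw: "(\<Prod>i<n. \<Prod>j\<in>{Suc i..<n}. r i - r j) = (\<Prod>j<n. \<Prod>i<j. r j - r i)"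
  proof (induction n)
    case 0 then show ?case by simp
  next
    case (Suc n)
    have "(\<Prod>i<Suc n. \<Prod>j\<in>{Suc i..<Suc n}. r i - r j) = (\<Prod>i<n. (\<Prod>j\<in>{Suc i..<n}. r i - r j) * (r i - r n))"
    proof -
      have "(\<Prod>i<Suc n. \<Prod>j\<in>{Suc i..<Suc n}. r i - r j) = (\<Prod>i<n. \<Prod>j\<in>{Suc i..<Suc n}. r i - r j)"
        by simp
      also have "\<dots> = (\<Prod>i<n. (\<Prod>j\<in>{Suc i..<n}. r i - r j) * (r i - r n))"
        by (rule prod.cong[OF refl]) (simp add: prod.atLeastLessThan_Suc)
      finally show ?thesis .
    qed
    also have "\<dots> = (\<Prod>j<n. \<Prod>i<j. r j - r i) * (\<Prod>i<n. r n - r i)"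
      using Suc by (simp add: prod.distrib diff_char2[OF ch] add.commute)
    also have "\<dots> = (\<Prod>j<Suc n. \<Prod>i<j. r j - r i)" by simp
    finally show ?case .
  qed
  have "(\<Prod>i<n. \<Prod>j\<in>{..<n} - {i}. r i - r j) = (\<Prod>i<n. (\<Prod>l<i. r i - r l) * (\<Prod>j\<in>{Suc i..<n}. r i - r j))"
    by (rule prod.cong[OF refl]) (simp add: split)
  also have "\<dots> = (\<Prod>i<n. \<Prod>l<i. r i - r l) * (\<Prod>i<n. \<Prod>l<i. r i - r l)"
    by (simp add: prod.distrib sw)
  finally show ?thesis by (simp add: power2_eq_square)
qed

lemma det_mat_scale_power:
  "det (mat n n (\<lambda>(i, k). c ^ (i + k) * f i k)) = c ^ (n * (n - 1)) * det (mat n n (\<lambda>(i, k). f i k))"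
proof -
  have "(\<Prod>i=0..<n. c ^ (i + p i) * f i (p i)) = c ^ (n * (n - 1)) * (\<Prod>i=0..<n. f i (p i))"
    if "p permutes {0..<n}" for p
  proof -
    have "(\<Prod>i=0..<n. c ^ (i + p i)) = c ^ (n * (n - 1))"
      by (simp add: power_sum[symmetric] sum_permutes_add[OF that])
    then show ?thesis
      by (simp add: prod.distrib)
  qed
  then show ?thesis
    by (simp add: det_leibniz sum_distrib_left algebra_simps)
qed

section \<open>Pi_d as a determinant of power sums of critical values\<close>

text \<open>The power sum b^(n s) \<Sum>_i g(tau_i)^s over the critical points of g, where b = coeff g (2 n + 1),
  written as a polynomial in the coefficients of g: g(tau_i) = even_part g n (tau_i^2), and the power
  sums of the roots tau_i^2 of odd_part g n come from Newton's identities.\<close>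

definition crit_power_sum :: "'k::field poly \<Rightarrow> nat \<Rightarrow> nat \<Rightarrow> 'k" where
  "crit_power_sum g n s = (\<Sum>j\<le>n * s. coeff (even_part g n ^ s) j * coeff g (Suc (2 * n)) ^ (n * s - j)
     * newton_pow_sum (\<lambda>l. coeff (odd_part g n) (n - l)) n j)"

definition crit_det :: "'k::field poly \<Rightarrow> nat \<Rightarrow> 'k" where
  "crit_det g n = det (mat n n (\<lambda>(i, k). crit_power_sum g n (i + k)))"

context critical_points
begin

lemma crit_power_sum_eq:
  "crit_power_sum g n s = coeff g (Suc (2 * n)) ^ (n * s) * (\<Sum>i<n. poly g (\<tau> ! i) ^ s)"
proof -
  define b where "b = coeff g (Suc (2 * n))"
  define u where "u i = (\<tau> ! i) ^ 2" for i
  define G where "G = even_part g n ^ s"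
  interpret N: newton n u b "odd_part g n"
    by unfold_locales (simp add: odd_part_critical_points u_def b_def)
  have degG: "degree G \<le> n * s"
    using degree_power_le[of "even_part g n" s] degree_even_part[of g n]
    by (simp add: G_def mult.commute order_trans)
  have c: "N.c = (\<lambda>l. coeff (odd_part g n) (n - l))"
    by (simp add: N.c_def fun_eq_iff)
  have "crit_power_sum g n s = (\<Sum>j\<le>n * s. coeff G j * b ^ (n * s - j) * (b ^ j * N.p j))"
    by (simp add: crit_power_sum_def flip: b_def G_def c N.newton_pow_sum_eq)
  also have "\<dots> = b ^ (n * s) * (\<Sum>j\<le>n * s. coeff G j * N.p j)"
    unfolding sum_distrib_left
  proof (rule sum.cong)
    fix j assume "j \<in> {..n * s}"
    then have "b ^ (n * s - j) * b ^ j = b ^ (n * s)"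
      by (simp flip: power_add)
    then show "coeff G j * b ^ (n * s - j) * (b ^ j * N.p j) = b ^ (n * s) * (coeff G j * N.p j)"
      by (metis mult.assoc mult.left_commute)
  qed simp
  also have "\<dots> = b ^ (n * s) * (\<Sum>i<n. \<Sum>j\<le>n * s. coeff G j * u i ^ j)"
    unfolding N.p_def sum_distrib_left by (subst sum.swap) simp
  also have "\<dots> = b ^ (n * s) * (\<Sum>i<n. poly g (\<tau> ! i) ^ s)"
  proof -
    have "(\<Sum>j\<le>n * s. coeff G j * u i ^ j) = poly g (\<tau> ! i) ^ s" if "i < n" for i
    proof -
      have "(\<Sum>j\<le>n * s. coeff G j * u i ^ j) = poly G (u i)"
        unfolding poly_altdef
        by (rule sum.mono_neutral_right) (use degG in \<open>auto simp: coeff_eq_0\<close>)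
      then show ?thesis
        using poly_critical_point[OF that] by (simp add: G_def u_def poly_power)
    qed
    then show ?thesis
      by simp
  qed
  finally show ?thesis
    by (simp add: b_def)
qed

lemma crit_det_eq:
  "crit_det g n = coeff g (Suc (2 * n)) ^ (n * (n * (n - 1)))
     * (\<Prod>i<n. \<Prod>j\<in>{..<n} - {i}. poly g (\<tau> ! i) - poly g (\<tau> ! j))"
proof -
  have "crit_det g n = det (mat n n (\<lambda>(i, k). (coeff g (Suc (2 * n)) ^ n) ^ (i + k)
      * (\<Sum>j<n. poly g (\<tau> ! j) ^ (i + k))))"
    by (simp add: crit_det_def crit_power_sum_eq power_mult)
  then show ?thesis
    by (simp add: det_mat_scale_power det_hankel_power_sums prod_diff_pairs_char2[OF char_2] power_mult)
qed

end

lemma Pi_d_eq_crit_det: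
  assumes ch: "CHAR('k::alg_closed_field) = 2" and dg: "degree (g::'k poly) \<le> Suc (2 * n)"
    and b: "coeff g (Suc (2 * n)) \<noteq> 0"
  shows "coeff g (Suc (2 * n)) ^ (n * (n * (n - 1))) * Pi_d (Suc (2 * n)) g = crit_det g n"
proof -
  define \<tau> where "\<tau> = (SOME \<tau>. length \<tau> = n \<and>
    pderiv g = Polynomial.smult (coeff g (Suc (2 * n))) (\<Prod>i<n. [:\<tau> ! i, 1:] ^ 2))"
  have \<tau>: "length \<tau> = n"
    "pderiv g = Polynomial.smult (coeff g (Suc (2 * n))) (\<Prod>i<n. [:\<tau> ! i, 1:] ^ 2)"
    using someI_ex[OF ex_critical_points[OF ch dg b]] unfolding \<tau>_def by blast+
  interpret critical_points g n \<tau>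
    using ch dg \<tau> by unfold_locales
  have "Pi_d (Suc (2 * n)) g = (\<Prod>i<n. \<Prod>j\<in>{..<n} - {i}. poly g (\<tau> ! i) - poly g (\<tau> ! j))"
    by (simp add: Pi_d_def Let_def \<tau>_def)
  then show ?thesis
    by (simp add: crit_det_eq)
qed

section \<open>Degree and weight\<close>

lemma homog_fun_det:
  assumes "CHAR('k::field) = 2"
    and "\<And>i k. i < n \<Longrightarrow> k < n \<Longrightarrow> homog_fun m (D * (i + k)) (W * (i + k)) (\<lambda>v. A v i k)"
  shows "homog_fun m (D * (n * (n - 1))) (W * (n * (n - 1)))
    (\<lambda>v::nat \<Rightarrow> 'k. det (mat n n (\<lambda>(i, k). A v i k)))"
proof -
  have "homog_fun m (D * (n * (n - 1))) (W * (n * (n - 1)))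
      (\<lambda>v::nat \<Rightarrow> 'k. signof p * (\<Prod>i=0..<n. A v i (p i)))"
    if p: "p permutes {0..<n}" for p
  proof -
    have "homog_fun m (\<Sum>i=0..<n. D * (i + p i)) (\<Sum>i=0..<n. W * (i + p i))
        (\<lambda>v::nat \<Rightarrow> 'k. \<Prod>i=0..<n. A v i (p i))"
      using permutes_in_image[OF p] by (intro homog_fun_prod assms(2)) auto
    then show ?thesis
      by (rule homog_fun_cong)
        (simp_all add: sign_char2[OF assms(1)] sum_permutes_add[OF p] flip: sum_distrib_left)
  qed
  then show ?thesis
    unfolding det_leibniz by (intro homog_fun_sum) (auto simp: finite_permutations)
qed

lemma homog_fun_newton_pow_sum:
  assumes ch: "CHAR('k::field) = 2"
    and cc: "\<And>l. l \<le> n \<Longrightarrow> homog_fun m 1 (A + B * l) (\<lambda>v::nat \<Rightarrow> 'k. cc v l)"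
  shows "homog_fun m s ((A + B) * s) (\<lambda>v. newton_pow_sum (cc v) n s)"
proof (induction s rule: less_induct)
  case (less s)
  show ?case
  proof (cases "s = 0")
    case True
    then show ?thesis
      using homog_fun_of_nat_mult[OF ch homog_fun_one] by (simp add: newton_pow_sum.simps)
  next
    case False
    have "homog_fun m s ((A + B) * s)
        (\<lambda>v. cc v 0 ^ (s - 1) * (if s < n then of_nat (n - s) * cc v s else 0))"
    proof (cases "s < n")
      case True
      have "homog_fun m ((s - 1) * 1 + 1) ((s - 1) * (A + B * 0) + (A + B * s))
          (\<lambda>v. cc v 0 ^ (s - 1) * (of_nat (n - s) * cc v s))"
        using True by (intro homog_fun_mult homog_fun_power homog_fun_of_nat_mult[OF ch] cc) simp_all
      then show ?thesis
      proof (rule homog_fun_cong)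
        show "(s - 1) * (A + B * 0) + (A + B * s) = (A + B) * s"
          using False by (cases s) (simp_all add: algebra_simps)
      qed (use True False in auto)
    qed (simp add: homog_fun_zero)
    moreover have "homog_fun m s ((A + B) * s)
        (\<lambda>v. \<Sum>l\<in>{1..min s n}. cc v l * cc v 0 ^ (l - 1) * newton_pow_sum (cc v) n (s - l))"
    proof (rule homog_fun_sum)
      fix l assume l: "l \<in> {1..min s n}"
      have "homog_fun m (1 + (l - 1) * 1 + (s - l)) ((A + B * l) + (l - 1) * (A + B * 0) + (A + B) * (s - l))
          (\<lambda>v. cc v l * cc v 0 ^ (l - 1) * newton_pow_sum (cc v) n (s - l))"
        using l False by (intro homog_fun_mult homog_fun_power cc less) auto
      then show "homog_fun m s ((A + B) * s)
          (\<lambda>v. cc v l * cc v 0 ^ (l - 1) * newton_pow_sum (cc v) n (s - l))"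
      proof (rule homog_fun_cong)
        have "(A + B) * (s - l) + (A + B) * l = (A + B) * s"
          using l by (simp flip: add_mult_distrib2)
        then show "(A + B * l) + (l - 1) * (A + B * 0) + (A + B) * (s - l) = (A + B) * s"
          using l by (cases l) (auto simp: algebra_simps)
      qed (use l in auto)
    qed simp
    ultimately show ?thesis
      by (rule homog_fun_cong[OF homog_fun_diff[OF ch]]) (use False in \<open>simp_all add: newton_pow_sum.simps[of _ n s]\<close>)
  qed
qed

lemma homog_fun_coeff_power:
  assumes "\<And>i. i \<le> n \<Longrightarrow> homog_fun m 1 (M - B * i) (\<lambda>v::nat \<Rightarrow> 'k::field. coeff (G v) i)"
    and "\<And>v. degree (G v) \<le> n" and "B * n \<le> M"
  shows "homog_fun m s (s * M - B * j) (\<lambda>v. coeff (G v ^ s) j)"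
proof (induction s arbitrary: j)
  case 0
  then show ?case
    by (cases "j = 0") (simp_all add: homog_fun_one homog_fun_zero)
next
  case (Suc s)
  have "homog_fun m (Suc s) (Suc s * M - B * j) (\<lambda>v. coeff (G v) i * coeff (G v ^ s) (j - i))"
    if "i \<le> j" for i
  proof (cases "i \<le> n \<and> j - i \<le> n * s")
    case True
    have h: "homog_fun m (1 + s) ((M - B * i) + (s * M - B * (j - i)))
        (\<lambda>v. coeff (G v) i * coeff (G v ^ s) (j - i))"
      using True by (intro homog_fun_mult assms(1) Suc) simp
    have "B * i \<le> M"
      using True assms(3) by (meson mult_le_mono2 order_trans)
    moreover have "B * (j - i) \<le> B * n * s"
      using True by (simp add: mult.assoc)
    then have "B * (j - i) \<le> s * M"
      using assms(3) by (metis mult.commute mult_le_mono1 order_trans)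
    ultimately show ?thesis
      by (intro homog_fun_cong[OF h]) (use that in \<open>simp_all add: algebra_simps diff_mult_distrib2\<close>)
  next
    case False
    have zero: "coeff (G v) i * coeff (G v ^ s) (j - i) = 0" for v
    proof -
      have "degree (G v ^ s) \<le> n * s"
        using degree_power_le[of "G v" s] assms(2)[of v] by (meson mult_le_mono1 order_trans)
      then show ?thesis
        using False assms(2)[of v] by (auto simp: coeff_eq_0)
    qed
    show ?thesis
      by (rule homog_fun_cong[OF homog_fun_zero refl refl]) (rule zero[symmetric])
  qed
  then show ?case
    by (simp only: power_Suc coeff_mult) (rule homog_fun_sum, auto)
qed

lemma homog_fun_crit_power_sum:
  assumes ch: "CHAR('k::field) = 2" and mn: "m = 4 * n + 4"
  shows "homog_fun m ((n + 1) * s) ((m + 2 * n) * s)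
    (\<lambda>v::nat \<Rightarrow> 'k. crit_power_sum (L_at m (Suc (2 * n)) v) n s)"
proof -
  let ?g = "L_at m (Suc (2 * n)) :: (nat \<Rightarrow> 'k) \<Rightarrow> 'k poly"
  have coeff: "homog_fun m 1 (m - 2 * i) (\<lambda>v. coeff (?g v) i)" for i
    by (rule homog_fun_coeff_L_at[OF ch]) (simp add: mn)
  have even: "homog_fun m 1 (m - 4 * i) (\<lambda>v. coeff (even_part (?g v) n) i)" if "i \<le> n" for i
    by (rule homog_fun_cong[OF coeff[of "2 * i"]]) (use that in \<open>simp_all add: coeff_even_part\<close>)
  have odd: "homog_fun m 1 (2 + 4 * l) (\<lambda>v. coeff (odd_part (?g v) n) (n - l))" if "l \<le> n" for l
    by (rule homog_fun_cong[OF coeff[of "Suc (2 * (n - l))"]]) (use that mn in \<open>auto simp: coeff_odd_part\<close>)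
  have lead: "homog_fun m 1 2 (\<lambda>v. coeff (?g v) (Suc (2 * n)))"
    by (rule homog_fun_cong[OF coeff]) (simp_all add: mn)
  have "homog_fun m ((n + 1) * s) ((m + 2 * n) * s) (\<lambda>v. coeff (even_part (?g v) n ^ s) j
      * coeff (?g v) (Suc (2 * n)) ^ (n * s - j) * newton_pow_sum (\<lambda>l. coeff (odd_part (?g v) n) (n - l)) n j)"
    if j: "j \<le> n * s" for j
  proof -
    have h: "homog_fun m (s + (n * s - j) * 1 + j) ((s * m - 4 * j) + (n * s - j) * 2 + (2 + 4) * j)
      (\<lambda>v. coeff (even_part (?g v) n ^ s) j * coeff (?g v) (Suc (2 * n)) ^ (n * s - j)
         * newton_pow_sum (\<lambda>l. coeff (odd_part (?g v) n) (n - l)) n j)"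
      using mn by (intro homog_fun_mult homog_fun_power homog_fun_coeff_power homog_fun_newton_pow_sum[OF ch]
          even odd lead) (auto intro: degree_even_part)
    have "4 * j \<le> s * m"
      using j mn by (simp add: algebra_simps)
    then show ?thesis
      by (intro homog_fun_cong[OF h]) (use j in \<open>simp_all add: algebra_simps\<close>)
  qed
  then show ?thesis
    unfolding crit_power_sum_def by (intro homog_fun_sum) auto
qed

lemma homog_fun_crit_det:
  assumes ch: "CHAR('k::field) = 2" and mn: "m = 4 * n + 4"
  shows "homog_fun m ((n + 1) * (n * (n - 1))) ((m + 2 * n) * (n * (n - 1)))
    (\<lambda>v::nat \<Rightarrow> 'k. crit_det (L_at m (Suc (2 * n)) v) n)"
  unfolding crit_det_def by (intro homog_fun_det[OF ch] homog_fun_crit_power_sum[OF assms])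

lemma homog_fun_Pi_d_numerator:
  assumes ch: "CHAR('k::field) = 2" and mn: "m = 4 * n + 4" and dn: "d = Suc (2 * n)"
    and en: "n * (n - 1) = 2 * e"
  shows "homog_fun m ((d + 2) * e) ((6 * d + 4) * e)
    (\<lambda>v::nat \<Rightarrow> 'k. coeff (L_at m d v) d ^ e * crit_det (L_at m d v) n)"
proof -
  have "homog_fun m (e * 1 + (n + 1) * (n * (n - 1))) (e * (m - 2 * d) + (m + 2 * n) * (n * (n - 1)))
      (\<lambda>v::nat \<Rightarrow> 'k. coeff (L_at m d v) d ^ e * crit_det (L_at m d v) n)"
    unfolding dn
    by (intro homog_fun_mult homog_fun_power homog_fun_crit_det[OF ch mn] homog_fun_coeff_L_at[OF ch])
      (simp add: mn)
  then show ?thesis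
    by (rule homog_fun_cong) (simp_all only: en, simp_all add: dn mn algebra_simps)
qed

lemma Pi_d_numerator_eq:
  assumes ch: "CHAR('k::alg_closed_field) = 2" and mn: "m = 4 * n + 4" and dn: "d = Suc (2 * n)"
    and en: "n * (n - 1) = 2 * e" and b: "coeff (L_alpha d \<alpha> (fpoly m a)) d \<noteq> 0"
  shows "coeff (L_at m d (a(Suc m := \<alpha>))) d ^ e * crit_det (L_at m d (a(Suc m := \<alpha>))) n
    = coeff (L_alpha d \<alpha> (fpoly m a)) d ^ (d * e) * Pi_d d (L_alpha d (\<alpha>::'k) (fpoly m a))"
proof -
  have "degree (L_alpha d \<alpha> (fpoly m a)) \<le> Suc (2 * n)"
    using degree_L_at[OF ch, of m d "a(Suc m := \<alpha>)"] unfolding L_at_fun_upd by (simp add: mn dn)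
  then have "crit_det (L_alpha d \<alpha> (fpoly m a)) n
      = coeff (L_alpha d \<alpha> (fpoly m a)) d ^ (n * (2 * e)) * Pi_d d (L_alpha d \<alpha> (fpoly m a))"
    using Pi_d_eq_crit_det[OF ch _ b[unfolded dn]] unfolding en by (simp add: dn)
  then show ?thesis
    by (simp add: L_at_fun_upd dn algebra_simps power_add[symmetric])
qed

lemma parameters_mod_4:
  fixes m d e :: nat
  assumes "m \<ge> 8" "m mod 4 = 0" "d = (m - 2) div 2" "e = ((d - 1) div 2) choose 2"
  obtains n where "m = 4 * n + 4" "d = Suc (2 * n)" "n * (n - 1) = 2 * e"
proof -
  obtain k where "m = 4 * k"
    using assms(2) by (metis dvdE mod_eq_0_iff_dvd)
  then have "m = 4 * (k - 2) + 8"
    using assms(1) by linarith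
  moreover have "even (((d - 1) div 2) * ((d - 1) div 2 - 1))"
    by (cases "even ((d - 1) div 2)") auto
  ultimately show ?thesis
    using assms(3,4) by (intro that[of "(d - 1) div 2"]) (simp_all add: choose_two)
qed

theorem lemma2p6:
  fixes m d e :: nat
  assumes "m \<ge> 8" and "m mod 4 = 0"
    and "d = (m - 2) div 2" and "e = ((d - 1) div 2) choose 2"
    and "CHAR('k::alg_closed_field) = 2"
  shows "\<exists>P :: (nat \<Rightarrow>\<^sub>0 nat) \<Rightarrow>\<^sub>0 bit.
     (\<forall>mon \<in> Poly_Mapping.keys P.
        Poly_Mapping.keys mon \<subseteq> {..Suc m}
        \<and> (\<Sum>i\<le>m. Poly_Mapping.lookup mon i) = (d + 2) * e
        \<and> Poly_Mapping.lookup mon (Suc m) + (\<Sum>i\<le>m. i * Poly_Mapping.lookup mon i) = (6 * d + 4) * e)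
   \<and> (\<forall>(a :: nat \<Rightarrow> 'k) (\<alpha> :: 'k).
        coeff (L_alpha d \<alpha> (fpoly m a)) d \<noteq> 0 \<longrightarrow>
        mpoly_eval P (a(Suc m := \<alpha>))
          = coeff (L_alpha d \<alpha> (fpoly m a)) d ^ (d * e) * Pi_d d (L_alpha d \<alpha> (fpoly m a)))"
proof -
  obtain n where mn: "m = 4 * n + 4" and dn: "d = Suc (2 * n)" and en: "n * (n - 1) = 2 * e"
    using parameters_mod_4[OF assms(1-4)] .
  obtain P :: "(nat \<Rightarrow>\<^sub>0 nat) \<Rightarrow>\<^sub>0 bit" where
    types: "\<forall>mo\<in>Poly_Mapping.keys P. mon_of_type m ((d + 2) * e) ((6 * d + 4) * e) mo" and
    eval: "\<forall>v :: nat \<Rightarrow> 'k. mpoly_eval P v = coeff (L_at m d v) d ^ e * crit_det (L_at m d v) n"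
    using homog_fun_imp_mpoly[OF assms(5) homog_fun_Pi_d_numerator[OF assms(5) mn dn en]] by blast
  show ?thesis
  proof (intro exI[of _ P] conjI allI impI)
    show "\<forall>mon\<in>Poly_Mapping.keys P. Poly_Mapping.keys mon \<subseteq> {..Suc m}
        \<and> (\<Sum>i\<le>m. Poly_Mapping.lookup mon i) = (d + 2) * e
        \<and> Poly_Mapping.lookup mon (Suc m) + (\<Sum>i\<le>m. i * Poly_Mapping.lookup mon i) = (6 * d + 4) * e"
      using types unfolding mon_of_type_def by blast
    show "mpoly_eval P (a(Suc m := \<alpha>))
        = coeff (L_alpha d \<alpha> (fpoly m a)) d ^ (d * e) * Pi_d d (L_alpha d \<alpha> (fpoly m a))"
      if "coeff (L_alpha d \<alpha> (fpoly m a)) d \<noteq> 0" for a :: "nat \<Rightarrow> 'k" and \<alpha>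
      using eval Pi_d_numerator_eq[OF assms(5) mn dn en that] by simp
  qed
qed

end
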